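(* Let $X$ be a compact metric space and $f\colon X\to X$ continuous. If $(X,f)$ has any one of the following properties, then it has property $P_e$: (1) two-sided limit shadowing; (2) two-sided orbital limit shadowing; (3) $\delta$-restricted two-sided orbital limit shadowing.
   Context: A full trajectory is a sequence $\langle x_i\rangle_{i\in\mathbb Z}$ in $X$ with $f(x_i)=x_{i+1}$ for all $i$. For a two-sided sequence, $\omega(\langle x_i\rangle)=\bigcap_{M\in\mathbb N}\overline{\{x_n:n>M\}}$, $\alpha(\langle x_i\rangle)=\bigcap_{M\in\mathbb N}\overline{\{x_n:n<-M\}}$. $ICT_f$ is the set of nonempty closed internally chain transitive sets, where $A$ is internally chain transitive if for all $a,b\in A$ and $\delta>0$ there exist $x_0=a,\dots,x_N=b$ in $A$, $N\ge1$, with $d(f(x_i),x_{i+1})<\delta$. Property $P_e$: for every $A\in ICT_f$ there is a full trajectory $\langle x_i\rangle$ with $\alpha(\langle x_i\rangle)=\omega(\langle x_i\rangle)=A$. A two-sided asymptotic pseudo-orbit is $\langle x_i\rangle_{i\in\mathbb Z}$ with $d(f(x_i),x_{i+1})\to0$ as $i\to\pm\infty$; it is a two-sided asymptotic $\delta$-pseudo-orbit if moreover $d(f(x_i),x_{i+1})<\delta$ for all $i\in\mathbb Z$. Two-sided limit shadowing: every two-sided asymptotic pseudo-orbit $\langle x_i\rangle$ admits a full trajectory $\langle z_i\rangle$ with $d(z_i,x_i)\to0$ as $i\to\pm\infty$. Two-sided orbital limit shadowing: every two-sided asymptotic pseudo-orbit $\langle x_i\rangle$ admits a full trajectory $\langle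 z_i\rangle$ with $\alpha(\langle z_i\rangle)=\alpha(\langle x_i\rangle)$ and $\omega(\langle z_i\rangle)=\omega(\langle x_i\rangle)$. $\delta$-restricted two-sided orbital limit shadowing: there exists $\delta>0$ such that every two-sided asymptotic $\delta$-pseudo-orbit $\langle x_i\rangle$ admits a full trajectory $\langle z_i\rangle$ with $\alpha(\langle z_i\rangle)=\alpha(\langle x_i\rangle)$ and $\omega(\langle z_i\rangle)=\omega(\langle x_i\rangle)$. *)

theory Defs
  imports "HOL-Analysis.Analysis"
begin

definition full_trajectory :: "'a set \<Rightarrow> ('a \<Rightarrow> 'a) \<Rightarrow> (int \<Rightarrow> 'a) \<Rightarrow> bool" where
  "full_trajectory X f x \<longleftrightarrow> (\<forall>i. x i \<in> X \<and> f (x i) = x (i + 1))"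

definition omega_limit :: "(int \<Rightarrow> 'a::metric_space) \<Rightarrow> 'a set" where
  "omega_limit x = (\<Inter>M::nat. closure {x n | n. n > int M})"

definition alpha_limit :: "(int \<Rightarrow> 'a::metric_space) \<Rightarrow> 'a set" where
  "alpha_limit x = (\<Inter>M::nat. closure {x n | n. n < - int M})"

definition internally_chain_transitive :: "('a::metric_space \<Rightarrow> 'a) \<Rightarrow> 'a set \<Rightarrow> bool" where
  "internally_chain_transitive f A \<longleftrightarrow>
     (\<forall>a\<in>A. \<forall>b\<in>A. \<forall>\<delta>>0. \<exists>N::nat. \<exists>c::nat \<Rightarrow> 'a. N \<ge> 1 \<and> c 0 = a \<and> c N = b \<and>
        (\<forall>i\<le>N. c i \<in> A) \<and> (\<forall>i<N. dist (f (c i)) (c (Suc i)) < \<delta>))"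

definition ICT :: "'a set \<Rightarrow> ('a::metric_space \<Rightarrow> 'a) \<Rightarrow> 'a set set" where
  "ICT X f = {A. A \<subseteq> X \<and> A \<noteq> {} \<and> closed A \<and> internally_chain_transitive f A}"

definition property_Pe :: "'a set \<Rightarrow> ('a::metric_space \<Rightarrow> 'a) \<Rightarrow> bool" where
  "property_Pe X f \<longleftrightarrow> (\<forall>A\<in>ICT X f. \<exists>x. full_trajectory X f x \<and>
      alpha_limit x = A \<and> omega_limit x = A)"

definition two_sided_asymptotic_pseudo_orbit :: "'a set \<Rightarrow> ('a::metric_space \<Rightarrow> 'a) \<Rightarrow> (int \<Rightarrow> 'a) \<Rightarrow> bool" where
  "two_sided_asymptotic_pseudo_orbit X f x \<longleftrightarrow> (\<forall>i. x i \<in> X) \<and>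
     ((\<lambda>i. dist (f (x i)) (x (i + 1))) \<longlongrightarrow> 0) at_top \<and>
     ((\<lambda>i. dist (f (x i)) (x (i + 1))) \<longlongrightarrow> 0) at_bot"

definition two_sided_asymptotic_delta_pseudo_orbit :: "'a set \<Rightarrow> ('a::metric_space \<Rightarrow> 'a) \<Rightarrow> real \<Rightarrow> (int \<Rightarrow> 'a) \<Rightarrow> bool" where
  "two_sided_asymptotic_delta_pseudo_orbit X f \<delta> x \<longleftrightarrow> two_sided_asymptotic_pseudo_orbit X f x \<and>
     (\<forall>i. dist (f (x i)) (x (i + 1)) < \<delta>)"

definition two_sided_limit_shadowing :: "'a set \<Rightarrow> ('a::metric_space \<Rightarrow> 'a) \<Rightarrow> bool" where
  "two_sided_limit_shadowing X f \<longleftrightarrow> (\<forall>x. two_sided_asymptotic_pseudo_orbit X f x \<longrightarrow>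
     (\<exists>z. full_trajectory X f z \<and> ((\<lambda>i. dist (z i) (x i)) \<longlongrightarrow> 0) at_top \<and>
          ((\<lambda>i. dist (z i) (x i)) \<longlongrightarrow> 0) at_bot))"

definition two_sided_orbital_limit_shadowing :: "'a set \<Rightarrow> ('a::metric_space \<Rightarrow> 'a) \<Rightarrow> bool" where
  "two_sided_orbital_limit_shadowing X f \<longleftrightarrow> (\<forall>x. two_sided_asymptotic_pseudo_orbit X f x \<longrightarrow>
     (\<exists>z. full_trajectory X f z \<and> alpha_limit z = alpha_limit x \<and> omega_limit z = omega_limit x))"

definition delta_restricted_two_sided_orbital_limit_shadowing :: "'a set \<Rightarrow> ('a::metric_space \<Rightarrow> 'a) \<Rightarrow> bool" where
  "delta_restricted_two_sided_orbital_limit_shadowing X f \<longleftrightarrow> (\<exists>\<delta>>0. \<forall>x.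
     two_sided_asymptotic_delta_pseudo_orbit X f \<delta> x \<longrightarrow>
     (\<exists>z. full_trajectory X f z \<and> alpha_limit z = alpha_limit x \<and> omega_limit z = omega_limit x))"

end

theory Submission
  imports Defs
begin

text \<open>
  Let \<open>A\<close> be a closed internally chain transitive set and fix \<open>a \<in> A\<close>. For each \<open>k\<close>,
  compactness of \<open>A\<close> gives a finite \<open>1/(k+1)\<close>-net, and chain transitivity joins its points
  into a \<open>\<delta>/(k+1)\<close>-chain in \<open>A\<close> from \<open>a\<close> back to \<open>a\<close>. Running through these loops one
  after another gives the positive half, running through them backwards the negative half of
  a two-sided asymptotic \<open>\<delta>\<close>-pseudo-orbit in \<open>A\<close> that comes arbitrarily close to every
  point of \<open>A\<close> in both time directions, so its \<open>\<alpha>\<close>- and \<open>\<omega>\<close>-limit sets both equal \<open>A\<close>.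
  A trajectory shadowing it in the orbital sense has the same limit sets. The two other
  shadowing properties imply the \<open>\<delta>\<close>-restricted one.
\<close>

section \<open>Limit sets of two-sided sequences\<close>

lemma omega_limit_iff:
  "y \<in> omega_limit x \<longleftrightarrow> (\<forall>e>0. \<exists>\<^sub>F i in at_top. dist (x i) y < e)"
proof -
  have cofinal: "(\<forall>M::nat. \<exists>i>int M. P i) \<longleftrightarrow> (\<forall>M::int. \<exists>i\<ge>M. P i)" for P :: "int \<Rightarrow> bool"
  proof
    assume H: "\<forall>M::nat. \<exists>i>int M. P i"
    show "\<forall>M::int. \<exists>i\<ge>M. P i"
    proof
      fix M :: int
      obtain i where "i > int (nat M)" "P i" using H by blast
      then show "\<exists>i\<ge>M. P i" by (intro exI[of _ i]) (auto split: if_splits)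
    qed
  next
    assume H: "\<forall>M::int. \<exists>i\<ge>M. P i"
    show "\<forall>M::nat. \<exists>i>int M. P i"
    proof
      fix M :: nat
      obtain i where "i \<ge> int M + 1" "P i" using H by blast
      then show "\<exists>i>int M. P i" by (intro exI[of _ i]) auto
    qed
  qed
  have "y \<in> omega_limit x \<longleftrightarrow> (\<forall>M::nat. \<forall>e>0. \<exists>i>int M. dist (x i) y < e)"
    unfolding omega_limit_def by (auto simp: closure_approachable) blast
  also have "\<dots> \<longleftrightarrow> (\<forall>e>0. \<forall>M::nat. \<exists>i>int M. dist (x i) y < e)"
    by blast
  also have "\<dots> \<longleftrightarrow> (\<forall>e>0. \<forall>M::int. \<exists>i\<ge>M. dist (x i) y < e)"
    by (simp only: cofinal)
  finally show ?thesis
    by (simp add: frequently_def eventually_at_top_linorder)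
qed

lemma alpha_limit_eq_omega_limit_mirror: "alpha_limit x = omega_limit (\<lambda>i. x (- i))"
proof -
  have "{x i | i. i < - int M} = {x (- i) | i. i > int M}" for M :: nat
  proof (intro set_eqI iffI)
    fix y assume "y \<in> {x i | i. i < - int M}"
    then obtain i where "y = x i" "i < - int M" by blast
    then show "y \<in> {x (- i) | i. i > int M}" by (intro CollectI exI[of _ "- i"]) auto
  qed force
  then show ?thesis
    unfolding alpha_limit_def omega_limit_def by simp
qed

lemma omega_limit_subset:
  assumes "closed A" "\<And>i. x i \<in> A"
  shows "omega_limit x \<subseteq> A"
proof -
  have "omega_limit x \<subseteq> closure {x i | i. i > int 0}"
    unfolding omega_limit_def by (rule INT_lower) simp
  also have "\<dots> \<subseteq> A"
    using assms by (intro closure_minimal) auto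
  finally show ?thesis .
qed

lemma omega_limit_eq_if_asymptotic:
  assumes "((\<lambda>i. dist (z i) (x i)) \<longlongrightarrow> 0) at_top"
  shows "omega_limit z = omega_limit x"
proof -
  have subset: "omega_limit z \<subseteq> omega_limit x"
    if asymptotic: "((\<lambda>i. dist (z i) (x i)) \<longlongrightarrow> 0) at_top" for z x :: "int \<Rightarrow> 'a"
  proof
    fix y assume "y \<in> omega_limit z"
    show "y \<in> omega_limit x" unfolding omega_limit_iff
    proof (intro allI impI)
      fix e :: real assume "e > 0"
      then have "\<exists>\<^sub>F i in at_top. dist (z i) y < e / 2"
        using \<open>y \<in> omega_limit z\<close> omega_limit_iff half_gt_zero by blast
      moreover have "\<forall>\<^sub>F i in at_top. dist (z i) (x i) < e / 2"
        using asymptotic \<open>e > 0\<close> by (intro order_tendstoD(2)) auto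
      ultimately show "\<exists>\<^sub>F i in at_top. dist (x i) y < e"
        by (elim frequently_rev_mp eventually_mono) (metis dist_commute dist_triangle_half_l)
    qed
  qed
  show ?thesis
    using subset[OF assms] subset[of x z] assms by (simp add: dist_commute)
qed

lemma alpha_limit_eq_if_asymptotic:
  assumes "((\<lambda>i. dist (z i) (x i)) \<longlongrightarrow> 0) at_bot"
  shows "alpha_limit z = alpha_limit x"
  unfolding alpha_limit_eq_omega_limit_mirror
  by (rule omega_limit_eq_if_asymptotic)
    (use assms in \<open>simp add: filterlim_def at_bot_mirror filtermap_filtermap\<close>)

lemma frequently_at_top_int:
  assumes "\<exists>\<^sub>F n in sequentially. P (int n)"
  shows "\<exists>\<^sub>F i in at_top. P i"
proof -
  have "\<exists>i\<ge>M. P i" for M :: int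
  proof -
    obtain n where "n \<ge> nat M" "P (int n)" using assms unfolding frequently_sequentially by blast
    then show ?thesis by (intro exI[of _ "int n"]) auto
  qed
  then show ?thesis unfolding frequently_def eventually_at_top_linorder by blast
qed

lemma tendsto_at_bot_int:
  "((\<lambda>n. g (- int n)) \<longlongrightarrow> l) sequentially \<Longrightarrow> (g \<longlongrightarrow> l) at_bot"
  unfolding filterlim_def at_bot_mirror filtermap_filtermap
  by (rule filterlim_int_of_nat_at_topD[unfolded filterlim_def])

section \<open>Chains in internally chain transitive sets\<close>

definition delta_chain :: "('a::metric_space \<Rightarrow> 'a) \<Rightarrow> 'a set \<Rightarrow> real \<Rightarrow> nat \<Rightarrow> (nat \<Rightarrow> 'a) \<Rightarrow> bool" where
  "delta_chain f A \<delta> N c \<longleftrightarrow> (\<forall>i\<le>N. c i \<in> A) \<and> (\<forall>i<N. dist (f (c i)) (c (Suc i)) < \<delta>)"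

lemma internally_chain_transitive_iff_delta_chain:
  "internally_chain_transitive f A \<longleftrightarrow>
     (\<forall>a\<in>A. \<forall>b\<in>A. \<forall>\<delta>>0. \<exists>N c. N \<ge> 1 \<and> c 0 = a \<and> c N = b \<and> delta_chain f A \<delta> N c)"
  unfolding internally_chain_transitive_def delta_chain_def by blast

definition chain_append :: "nat \<Rightarrow> (nat \<Rightarrow> 'a) \<Rightarrow> (nat \<Rightarrow> 'a) \<Rightarrow> nat \<Rightarrow> 'a" where
  "chain_append N c d i = (if i \<le> N then c i else d (i - N))"

lemma delta_chain_append:
  assumes "delta_chain f A \<delta> N c" "delta_chain f A \<delta> M d" "c N = d 0"
  shows "delta_chain f A \<delta> (N + M) (chain_append N c d)"
  unfolding delta_chain_def
proof (intro conjI allI impI)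
  fix i assume "i \<le> N + M"
  then show "chain_append N c d i \<in> A"
    using assms(1,2) by (auto simp: delta_chain_def chain_append_def)
next
  fix i assume "i < N + M"
  consider "i < N" | "i = N" | "N < i" by linarith
  then show "dist (f (chain_append N c d i)) (chain_append N c d (Suc i)) < \<delta>"
  proof cases
    case 3
    then have "Suc i - N = Suc (i - N)" by simp
    then show ?thesis using 3 \<open>i < N + M\<close> assms(2) by (auto simp: delta_chain_def chain_append_def)
  qed (use assms \<open>i < N + M\<close> in \<open>auto simp: delta_chain_def chain_append_def\<close>)
qed

lemma chain_append_ends:
  assumes "c N = d 0"
  shows "chain_append N c d 0 = c 0" "chain_append N c d (N + M) = d M"
  using assms by (auto simp: chain_append_def)

lemma chain_append_image:
  assumes "c N = d 0"
  shows "chain_append N c d ` {..N + M} = c ` {..N} \<union> d ` {..M}"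
proof -
  have "d j \<in> chain_append N c d ` {..N + M}" if "j \<le> M" for j
    using assms that
    by (cases "j = 0") (auto simp: chain_append_def image_iff intro!: bexI[of _ "N + j"])
  then show ?thesis
    by (fastforce simp: chain_append_def)
qed

lemma ict_loop_through_finite:
  assumes "internally_chain_transitive f A" "a \<in> A" "\<delta> > 0" "finite P" "P \<subseteq> A"
  shows "\<exists>N c. N \<ge> 1 \<and> c 0 = a \<and> c N = a \<and> delta_chain f A \<delta> N c \<and> P \<subseteq> c ` {..N}"
  using assms(4,5)
proof (induction P rule: finite_induct)
  case empty
  then show ?case
    using assms(1-3) unfolding internally_chain_transitive_iff_delta_chain by blast
next
  case (insert p P)
  then obtain N c where c: "N \<ge> 1" "c 0 = a" "c N = a" "delta_chain f A \<delta> N c" "P \<subseteq> c ` {..N}"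
    by auto
  obtain N1 c1 where c1: "c1 0 = a" "c1 N1 = p" "delta_chain f A \<delta> N1 c1"
    using assms(1-3) insert.prems unfolding internally_chain_transitive_iff_delta_chain by blast
  obtain N2 c2 where c2: "c2 0 = p" "c2 N2 = a" "delta_chain f A \<delta> N2 c2"
    using assms(1-3) insert.prems unfolding internally_chain_transitive_iff_delta_chain by blast
  define d where "d = chain_append N1 c1 c2"
  define e where "e = chain_append N c d"
  have d: "d 0 = a" "d (N1 + N2) = a" "delta_chain f A \<delta> (N1 + N2) d" "p \<in> d ` {..N1 + N2}"
    using c1 c2 chain_append_ends[of c1 N1 c2] delta_chain_append[of f A \<delta> N1 c1 N2 c2]
      chain_append_image[of c1 N1 c2 N2] by (auto simp: d_def)
  have "e 0 = a" "e (N + (N1 + N2)) = a"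
    using c d chain_append_ends[of c N d] by (auto simp: e_def)
  moreover have "delta_chain f A \<delta> (N + (N1 + N2)) e"
    using c(3,4) d(1,3) by (simp add: e_def delta_chain_append)
  moreover have "insert p P \<subseteq> e ` {..N + (N1 + N2)}"
    using c d chain_append_image[of c N d "N1 + N2"] by (auto simp: e_def)
  ultimately show ?case
    using c(1) by (intro exI[of _ "N + (N1 + N2)"] exI[of _ e]) auto
qed

lemma ict_dense_loop:
  assumes "internally_chain_transitive f A" "compact A" "a \<in> A" "\<delta> > 0" "r > 0"
  shows "\<exists>N c. N \<ge> 1 \<and> c 0 = a \<and> c N = a \<and> delta_chain f A \<delta> N c \<and>
           (\<forall>y\<in>A. \<exists>i\<le>N. dist (c i) y < r)"
proof -
  obtain P where P: "P \<subseteq> A" "finite P" "A \<subseteq> (\<Union>p\<in>P. ball p r)"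
    using compactE_image[OF assms(2), of A "\<lambda>p. ball p r"] assms(5) by force
  obtain N c where "N \<ge> 1" "c 0 = a" "c N = a" "delta_chain f A \<delta> N c" "P \<subseteq> c ` {..N}"
    using ict_loop_through_finite[OF assms(1,3,4) P(2,1)] by blast
  moreover have "\<forall>y\<in>A. \<exists>i\<le>N. dist (c i) y < r"
    using P(3) \<open>P \<subseteq> c ` {..N}\<close> by (fastforce simp: subset_iff)
  ultimately show ?thesis by blast
qed

section \<open>Concatenating infinitely many loops\<close>

text \<open>\<open>block_index N n = (k, i)\<close>: the \<open>n\<close>-th term of the concatenation of blocks of
  lengths \<open>N 0, N 1, \<dots>\<close> is term \<open>i\<close> of block \<open>k\<close>.\<close>

primrec block_index :: "(nat \<Rightarrow> nat) \<Rightarrow> nat \<Rightarrow> nat \<times> nat" where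
  "block_index N 0 = (0, 0)"
| "block_index N (Suc n) =
     (case block_index N n of (k, i) \<Rightarrow> if Suc i < N k then (k, Suc i) else (Suc k, 0))"

definition concat_blocks :: "(nat \<Rightarrow> nat) \<Rightarrow> (nat \<Rightarrow> nat \<Rightarrow> 'a) \<Rightarrow> nat \<Rightarrow> 'a" where
  "concat_blocks N c n = case_prod c (block_index N n)"

lemma block_index_add:
  assumes "block_index N n = (k, 0)" "i < N k"
  shows "block_index N (n + i) = (k, i)"
  using assms(2) by (induction i) (auto simp: assms(1))

lemma mono_block_index_fst: "mono (\<lambda>n. fst (block_index N n))"
  by (rule incseq_SucI) (auto split: prod.split)

context
  fixes N :: "nat \<Rightarrow> nat"
  assumes N_pos: "\<And>k. 0 < N k"
begin

lemma block_index_less: "snd (block_index N n) < N (fst (block_index N n))"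
  by (induction n) (auto split: prod.split simp: N_pos)

lemma block_index_block_start: "block_index N (\<Sum>j<k. N j) = (k, 0)"
proof (induction k)
  case (Suc k)
  have "N k - 1 < N k" using N_pos[of k] by simp
  then have last: "block_index N ((\<Sum>j<k. N j) + (N k - 1)) = (k, N k - 1)"
    by (rule block_index_add[OF Suc])
  have "(\<Sum>j<Suc k. N j) = Suc ((\<Sum>j<k. N j) + (N k - 1))"
    using N_pos[of k] by simp
  also have "block_index N \<dots> = (Suc k, 0)"
    using N_pos[of k] by (simp only: block_index.simps last) simp
  finally show ?case .
qed simp

lemma block_start_ge: "k \<le> (\<Sum>j<k. N j)"
proof -
  have "(\<Sum>j<k. 1) \<le> (\<Sum>j<k. N j)"
    using N_pos by (intro sum_mono) (simp add: Suc_leI)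
  then show ?thesis by simp
qed

lemma filterlim_block_index_fst: "filterlim (\<lambda>n. fst (block_index N n)) at_top sequentially"
  unfolding filterlim_at_top eventually_sequentially
proof
  fix k
  have "k \<le> fst (block_index N n)" if "(\<Sum>j<k. N j) \<le> n" for n
    using monoD[OF mono_block_index_fst[of N] that] block_index_block_start[of k] by simp
  then show "\<exists>m. \<forall>n\<ge>m. k \<le> fst (block_index N n)" by blast
qed

lemma concat_blocks_mem:
  assumes "\<And>k i. i < N k \<Longrightarrow> c k i \<in> A"
  shows "concat_blocks N c n \<in> A"
  using assms block_index_less[of n] by (auto simp: concat_blocks_def split: prod.split)

text \<open>Block \<open>k\<close> consists of \<open>c k 0, \<dots>, c k (N k - 1)\<close>; its endpoint \<open>c k (N k)\<close> is not
  repeated but reappears as the first term of block \<open>k + 1\<close>.\<close>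

context
  fixes c :: "nat \<Rightarrow> nat \<Rightarrow> 'a::metric_space"
  assumes loops: "\<And>k. c k (N k) = c (Suc k) 0"
begin

lemma concat_blocks_step:
  assumes "\<And>k i. i < N k \<Longrightarrow> P k (c k i) (c k (Suc i))"
  shows "P (fst (block_index N n)) (concat_blocks N c n) (concat_blocks N c (Suc n))"
proof -
  obtain k i where ki: "block_index N n = (k, i)" by fastforce
  have "i < N k" using block_index_less[of n] ki by simp
  then consider "Suc i < N k" | "Suc i = N k" by linarith
  then show ?thesis
    using ki assms[of i k] loops[of k] by cases (auto simp: concat_blocks_def)
qed

lemma concat_blocks_visits:
  assumes "i \<le> N k"
  shows "\<exists>n\<ge>k. concat_blocks N c n = c k i"
proof (cases "i < N k")
  case True
  then have "concat_blocks N c ((\<Sum>j<k. N j) + i) = c k i"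
    by (simp add: concat_blocks_def block_index_add[OF block_index_block_start])
  then show ?thesis using block_start_ge[of k] by (intro exI[of _ "(\<Sum>j<k. N j) + i"]) auto
next
  case False
  then have "concat_blocks N c (\<Sum>j<Suc k. N j) = c k i"
    using assms loops[of k]
    by (simp add: concat_blocks_def block_index_block_start del: sum.lessThan_Suc)
  then show ?thesis using block_start_ge[of "Suc k"] by (intro exI[of _ "\<Sum>j<Suc k. N j"]) auto
qed

lemma concat_blocks_step_tendsto_0:
  fixes E :: "'a \<Rightarrow> 'a \<Rightarrow> real"
  assumes "\<And>k i. i < N k \<Longrightarrow> E (c k i) (c k (Suc i)) < \<epsilon> k" "\<epsilon> \<longlonglongrightarrow> 0"
    and "\<And>u v. 0 \<le> E u v"
  shows "(\<lambda>n. E (concat_blocks N c n) (concat_blocks N c (Suc n))) \<longlonglongrightarrow> 0"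
proof (rule Lim_null_comparison)
  show "\<forall>\<^sub>F n in sequentially. norm (E (concat_blocks N c n) (concat_blocks N c (Suc n)))
          \<le> \<epsilon> (fst (block_index N n))"
    using concat_blocks_step[of "\<lambda>k u v. E u v < \<epsilon> k"] assms(1,3)
    by (intro always_eventually allI) (simp add: less_imp_le)
  show "(\<lambda>n. \<epsilon> (fst (block_index N n))) \<longlonglongrightarrow> 0"
    by (rule filterlim_compose[OF assms(2) filterlim_block_index_fst])
qed

lemma concat_blocks_frequently_near:
  assumes "\<And>k. \<exists>i\<le>N k. dist (c k i) y < r k" "r \<longlonglongrightarrow> 0" "e > 0"
  shows "\<exists>\<^sub>F n in sequentially. dist (concat_blocks N c n) y < e"
  unfolding frequently_sequentially
proof
  fix m
  obtain K where K: "\<And>k. k \<ge> K \<Longrightarrow> r k < e"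
    using order_tendstoD(2)[OF assms(2,3)] unfolding eventually_sequentially by blast
  obtain i where i: "i \<le> N (max m K)" "dist (c (max m K) i) y < e"
    using assms(1)[of "max m K"] K[of "max m K"] by force
  then obtain n where "n \<ge> max m K" "concat_blocks N c n = c (max m K) i"
    using concat_blocks_visits by blast
  then show "\<exists>n\<ge>m. dist (concat_blocks N c n) y < e"
    using i(2) by auto
qed

end

end

text \<open>\<open>E u v\<close> is the error of the step from \<open>u\<close> to \<open>v\<close>: \<open>dist (f u) v\<close> for the positive
  half of a pseudo-orbit, \<open>dist (f v) u\<close> for the negative half, which is traversed backwards.\<close>

definition asymptotic_delta_sequence :: "('a \<Rightarrow> 'a \<Rightarrow> real) \<Rightarrow> real \<Rightarrow> (nat \<Rightarrow> 'a) \<Rightarrow> bool" where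
  "asymptotic_delta_sequence E \<delta> s \<longleftrightarrow>
     (\<forall>n. E (s n) (s (Suc n)) < \<delta>) \<and> (\<lambda>n. E (s n) (s (Suc n))) \<longlonglongrightarrow> 0"

lemma concat_dense_loops:
  fixes c :: "nat \<Rightarrow> nat \<Rightarrow> 'a::metric_space" and E :: "'a \<Rightarrow> 'a \<Rightarrow> real"
  assumes "\<And>k. 0 < N k" "\<And>k. c k 0 = a" "\<And>k. c k (N k) = a" "\<And>k i. i \<le> N k \<Longrightarrow> c k i \<in> A"
    and step: "\<And>k i. i < N k \<Longrightarrow> E (c k i) (c k (Suc i)) < \<epsilon> k"
    and dense: "\<And>k y. y \<in> A \<Longrightarrow> \<exists>i\<le>N k. dist (c k i) y < r k"
    and "\<epsilon> \<longlonglongrightarrow> 0" "r \<longlonglongrightarrow> 0" "\<And>k. \<epsilon> k \<le> \<delta>" "\<And>u v. 0 \<le> E u v"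
  shows "concat_blocks N c 0 = a" "\<And>n. concat_blocks N c n \<in> A"
    and "asymptotic_delta_sequence E \<delta> (concat_blocks N c)"
    and "\<And>y e. y \<in> A \<Longrightarrow> e > 0 \<Longrightarrow> \<exists>\<^sub>F n in sequentially. dist (concat_blocks N c n) y < e"
proof -
  have loops: "c k (N k) = c (Suc k) 0" for k
    using assms(2,3) by simp
  show "concat_blocks N c 0 = a"
    using assms(2) by (simp add: concat_blocks_def)
  show "concat_blocks N c n \<in> A" for n
    using assms(4) by (intro concat_blocks_mem) (auto simp: assms(1))
  have "E (concat_blocks N c n) (concat_blocks N c (Suc n)) < \<delta>" for n
    using concat_blocks_step[of N c "\<lambda>k u v. E u v < \<delta>"] assms(1,9) loops step
    by (meson order_less_le_trans)
  then show "asymptotic_delta_sequence E \<delta> (concat_blocks N c)"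
    unfolding asymptotic_delta_sequence_def
    using concat_blocks_step_tendsto_0[of N c E \<epsilon>, OF assms(1) loops step assms(7,10)] by blast
  show "\<exists>\<^sub>F n in sequentially. dist (concat_blocks N c n) y < e" if "y \<in> A" "e > 0" for y e
    by (rule concat_blocks_frequently_near[of N c, OF assms(1) loops dense[OF that(1)] assms(8) that(2)])
qed

section \<open>Pseudo-orbits with prescribed limit sets\<close>

definition glue_halves :: "(nat \<Rightarrow> 'a) \<Rightarrow> (nat \<Rightarrow> 'a) \<Rightarrow> int \<Rightarrow> 'a" where
  "glue_halves s s' i = (if 0 \<le> i then s (nat i) else s' (nat (- i)))"

lemma glue_halves_nonneg [simp]: "glue_halves s s' (int n) = s n"
  by (simp add: glue_halves_def)

lemma glue_halves_mirror:
  assumes "s 0 = s' 0"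
  shows "(\<lambda>i. glue_halves s s' (- i)) = glue_halves s' s"
  using assms by (auto simp: glue_halves_def)

lemma glue_halves_nonpos:
  assumes "s 0 = s' 0"
  shows "glue_halves s s' (- int n) = s' n"
  using assms by (cases "n = 0") (simp_all add: glue_halves_def)

lemma glue_halves_step_nonneg: "glue_halves s s' (int n + 1) = s (Suc n)"
  using glue_halves_nonneg[of s s' "Suc n"] by (simp add: add.commute)

lemma glue_halves_step_neg:
  assumes "s 0 = s' 0"
  shows "glue_halves s s' (- int (Suc n) + 1) = s' n"
  using glue_halves_nonpos[of s s' n, OF assms] by simp

lemma glue_halves_pseudo_orbit:
  assumes "s 0 = s' 0" "\<And>n. s n \<in> X" "\<And>n. s' n \<in> X"
    and "asymptotic_delta_sequence (\<lambda>u v. dist (f u) v) \<delta> s"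
    and "asymptotic_delta_sequence (\<lambda>u v. dist (f v) u) \<delta> s'"
  shows "two_sided_asymptotic_delta_pseudo_orbit X f \<delta> (glue_halves s s')"
proof -
  define x where "x = glue_halves s s'"
  have fwd_bound: "\<And>n. dist (f (s n)) (s (Suc n)) < \<delta>"
    and fwd_lim: "(\<lambda>n. dist (f (s n)) (s (Suc n))) \<longlonglongrightarrow> 0"
    and bwd_bound: "\<And>n. dist (f (s' (Suc n))) (s' n) < \<delta>"
    and bwd_lim: "(\<lambda>n. dist (f (s' (Suc n))) (s' n)) \<longlonglongrightarrow> 0"
    using assms(4,5) by (simp_all add: asymptotic_delta_sequence_def)
  have step_nonneg: "dist (f (x (int n))) (x (int n + 1)) = dist (f (s n)) (s (Suc n))" for n
    by (simp only: x_def glue_halves_nonneg glue_halves_step_nonneg)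
  have step_neg:
    "dist (f (x (- int (Suc n)))) (x (- int (Suc n) + 1)) = dist (f (s' (Suc n))) (s' n)" for n
    by (simp only: x_def glue_halves_nonpos[of s s', OF assms(1)]
      glue_halves_step_neg[of s s', OF assms(1)])
  have "dist (f (x i)) (x (i + 1)) < \<delta>" for i
  proof (cases "0 \<le> i")
    case True
    then obtain n where "i = int n" by (rule nonneg_int_cases)
    then show ?thesis using fwd_bound[of n] by (simp only: step_nonneg)
  next
    case False
    then obtain n where "i = - int (Suc n)" using negD by force
    then show ?thesis using bwd_bound[of n] by (simp only: step_neg)
  qed
  moreover have "((\<lambda>i. dist (f (x i)) (x (i + 1))) \<longlongrightarrow> 0) at_top"
  proof -
    have "(\<lambda>n. dist (f (x (int n))) (x (int n + 1))) \<longlonglongrightarrow> 0"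
      using fwd_lim by (simp only: step_nonneg)
    then show ?thesis
      by (rule filterlim_int_of_nat_at_topD[of "\<lambda>i. dist (f (x i)) (x (i + 1))"])
  qed
  moreover have "((\<lambda>i. dist (f (x i)) (x (i + 1))) \<longlongrightarrow> 0) at_bot"
  proof (rule tendsto_at_bot_int)
    have "(\<lambda>n. dist (f (x (- int (Suc n)))) (x (- int (Suc n) + 1))) \<longlonglongrightarrow> 0"
      using bwd_lim by (simp only: step_neg)
    then show "(\<lambda>n. dist (f (x (- int n))) (x (- int n + 1))) \<longlonglongrightarrow> 0"
      by (rule LIMSEQ_imp_Suc)
  qed
  moreover have "x i \<in> X" for i
    using assms(2,3) by (simp add: x_def glue_halves_def)
  ultimately show ?thesis
    unfolding two_sided_asymptotic_delta_pseudo_orbit_def two_sided_asymptotic_pseudo_orbit_def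
      x_def[symmetric]
    by blast
qed

lemma omega_limit_glue_halves:
  assumes "closed A" "\<And>n. s n \<in> A" "\<And>n. s' n \<in> A"
    and "\<And>y e. y \<in> A \<Longrightarrow> e > 0 \<Longrightarrow> \<exists>\<^sub>F n in sequentially. dist (s n) y < e"
  shows "omega_limit (glue_halves s s') = A"
proof
  show "omega_limit (glue_halves s s') \<subseteq> A"
    using assms(1-3) by (intro omega_limit_subset) (simp_all add: glue_halves_def)
  show "A \<subseteq> omega_limit (glue_halves s s')"
    unfolding subset_iff omega_limit_iff
    using assms(4) by (auto intro!: frequently_at_top_int)
qed

lemma two_sided_pseudo_orbit_from_loops:
  fixes c :: "nat \<Rightarrow> nat \<Rightarrow> 'a::metric_space"
  assumes "closed A" "A \<subseteq> X" "\<And>k. 0 < N k" "\<And>k. c k 0 = a" "\<And>k. c k (N k) = a"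
    and chain: "\<And>k. delta_chain f A (\<epsilon> k) (N k) (c k)"
    and dense: "\<And>k y. y \<in> A \<Longrightarrow> \<exists>i\<le>N k. dist (c k i) y < r k"
    and "\<epsilon> \<longlonglongrightarrow> 0" "r \<longlonglongrightarrow> 0" "\<And>k. \<epsilon> k \<le> \<delta>"
  shows "\<exists>x. two_sided_asymptotic_delta_pseudo_orbit X f \<delta> x \<and> alpha_limit x = A \<and> omega_limit x = A"
proof -
  have c_in: "\<And>k i. i \<le> N k \<Longrightarrow> c k i \<in> A"
    and c_step: "\<And>k i. i < N k \<Longrightarrow> dist (f (c k i)) (c k (Suc i)) < \<epsilon> k"
    using chain by (simp_all add: delta_chain_def)
  note s = concat_dense_loops[of N c a A "\<lambda>u v. dist (f u) v" \<epsilon> r \<delta>,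
      OF assms(3-5) c_in c_step dense assms(8-10) zero_le_dist]
  define c' where "c' k i = c k (N k - i)" for k i
  have c'_ends: "\<And>k. c' k 0 = a" "\<And>k. c' k (N k) = a"
    using assms(4,5) by (simp_all add: c'_def)
  have c'_in: "\<And>k i. i \<le> N k \<Longrightarrow> c' k i \<in> A"
    using c_in by (simp add: c'_def)
  have c'_step: "dist (f (c' k (Suc i))) (c' k i) < \<epsilon> k" if "i < N k" for k i
    using c_step[of "N k - Suc i" k] that by (simp add: c'_def Suc_diff_Suc)
  have c'_dense: "\<And>k y. y \<in> A \<Longrightarrow> \<exists>i\<le>N k. dist (c' k i) y < r k"
    using dense by (metis c'_def diff_diff_cancel diff_le_self)
  note s' = concat_dense_loops[of N c' a A "\<lambda>u v. dist (f v) u" \<epsilon> r \<delta>,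
      OF assms(3) c'_ends c'_in c'_step c'_dense assms(8-10) zero_le_dist]
  let ?x = "glue_halves (concat_blocks N c) (concat_blocks N c')"
  have same_start: "concat_blocks N c 0 = concat_blocks N c' 0"
    using s(1) s'(1) by simp
  have "two_sided_asymptotic_delta_pseudo_orbit X f \<delta> ?x"
    using s(2,3) s'(2,3) assms(2) by (intro glue_halves_pseudo_orbit same_start) auto
  moreover have "omega_limit ?x = A"
    using s(2,4) s'(2) assms(1) by (intro omega_limit_glue_halves) auto
  moreover have "alpha_limit ?x = A"
  proof -
    have "(\<lambda>i. ?x (- i)) = glue_halves (concat_blocks N c') (concat_blocks N c)"
      by (rule glue_halves_mirror) (rule same_start)
    then show ?thesis
      unfolding alpha_limit_eq_omega_limit_mirror
      using s(2) s'(2,4) assms(1) by (simp add: omega_limit_glue_halves)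
  qed
  ultimately show ?thesis by blast
qed

lemma ICT_two_sided_pseudo_orbit:
  fixes X :: "'a::metric_space set"
  assumes "compact X" "A \<in> ICT X f" "\<delta> > 0"
  shows "\<exists>x. two_sided_asymptotic_delta_pseudo_orbit X f \<delta> x \<and> alpha_limit x = A \<and> omega_limit x = A"
proof -
  have "A \<subseteq> X" "A \<noteq> {}" "closed A" and ict: "internally_chain_transitive f A"
    using assms(2) by (auto simp: ICT_def)
  then have "compact A"
    using assms(1) by (metis compact_Int_closed inf.absorb_iff2)
  obtain a where "a \<in> A" using \<open>A \<noteq> {}\<close> by blast
  define \<epsilon> where "\<epsilon> k = \<delta> / real (Suc k)" for k
  define r where "r k = 1 / real (Suc k)" for k
  have \<epsilon>_lim: "\<epsilon> \<longlonglongrightarrow> 0" and r_lim: "r \<longlonglongrightarrow> 0"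
    unfolding \<epsilon>_def r_def by (intro LIMSEQ_Suc lim_const_over_n)+
  have \<epsilon>_le: "\<epsilon> k \<le> \<delta>" for k
    using assms(3) by (simp add: \<epsilon>_def divide_le_eq)
  have "\<forall>k. \<exists>N c. N \<ge> 1 \<and> c 0 = a \<and> c N = a \<and> delta_chain f A (\<epsilon> k) N c \<and>
          (\<forall>y\<in>A. \<exists>i\<le>N. dist (c i) y < r k)"
    using ict_dense_loop[OF ict \<open>compact A\<close> \<open>a \<in> A\<close>] assms(3) by (simp add: \<epsilon>_def r_def)
  then have "\<exists>N c. \<forall>k. N k \<ge> 1 \<and> c k 0 = a \<and> c k (N k) = a \<and>
      delta_chain f A (\<epsilon> k) (N k) (c k) \<and> (\<forall>y\<in>A. \<exists>i\<le>N k. dist (c k i) y < r k)"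
    by (simp only: choice_iff)
  then obtain N c where loop: "\<forall>k. N k \<ge> 1 \<and> c k 0 = a \<and> c k (N k) = a \<and>
      delta_chain f A (\<epsilon> k) (N k) (c k) \<and> (\<forall>y\<in>A. \<exists>i\<le>N k. dist (c k i) y < r k)"
    by blast
  then have loops: "\<And>k. 0 < N k" "\<And>k. c k 0 = a" "\<And>k. c k (N k) = a"
    "\<And>k. delta_chain f A (\<epsilon> k) (N k) (c k)" "\<And>k y. y \<in> A \<Longrightarrow> \<exists>i\<le>N k. dist (c k i) y < r k"
    by (auto simp: Suc_le_eq)
  show ?thesis
    by (rule two_sided_pseudo_orbit_from_loops[OF \<open>closed A\<close> \<open>A \<subseteq> X\<close> loops \<epsilon>_lim r_lim \<epsilon>_le])
qed

lemma orbital_limit_shadowing_if_limit_shadowing: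
  assumes "two_sided_limit_shadowing X f"
  shows "two_sided_orbital_limit_shadowing X f"
  unfolding two_sided_orbital_limit_shadowing_def
proof (intro allI impI)
  fix x assume "two_sided_asymptotic_pseudo_orbit X f x"
  then obtain z where z: "full_trajectory X f z" "((\<lambda>i. dist (z i) (x i)) \<longlongrightarrow> 0) at_top"
      "((\<lambda>i. dist (z i) (x i)) \<longlongrightarrow> 0) at_bot"
    using assms unfolding two_sided_limit_shadowing_def by blast
  then have "alpha_limit z = alpha_limit x" "omega_limit z = omega_limit x"
    by (simp_all add: alpha_limit_eq_if_asymptotic omega_limit_eq_if_asymptotic)
  then show "\<exists>z. full_trajectory X f z \<and> alpha_limit z = alpha_limit x \<and> omega_limit z = omega_limit x"
    using z(1) by blast
qed

lemma delta_restricted_if_orbital_limit_shadowing: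
  assumes "two_sided_orbital_limit_shadowing X f"
  shows "delta_restricted_two_sided_orbital_limit_shadowing X f"
  using assms unfolding delta_restricted_two_sided_orbital_limit_shadowing_def
    two_sided_orbital_limit_shadowing_def two_sided_asymptotic_delta_pseudo_orbit_def
  by (intro exI[of _ 1]) auto

theorem mainTheorem2:
  fixes X :: "'a::metric_space set" and f :: "'a \<Rightarrow> 'a"
  assumes "compact X" and "continuous_on X f" and "f ` X \<subseteq> X"
    and "two_sided_limit_shadowing X f \<or> two_sided_orbital_limit_shadowing X f
         \<or> delta_restricted_two_sided_orbital_limit_shadowing X f"
  shows "property_Pe X f"
proof -
  have "delta_restricted_two_sided_orbital_limit_shadowing X f"
    using assms(4) orbital_limit_shadowing_if_limit_shadowing
      delta_restricted_if_orbital_limit_shadowing by blast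
  then obtain \<delta> where "\<delta> > 0" and shadow: "\<And>x. two_sided_asymptotic_delta_pseudo_orbit X f \<delta> x \<Longrightarrow>
      \<exists>z. full_trajectory X f z \<and> alpha_limit z = alpha_limit x \<and> omega_limit z = omega_limit x"
    unfolding delta_restricted_two_sided_orbital_limit_shadowing_def by blast
  show ?thesis
    unfolding property_Pe_def
  proof
    fix A assume "A \<in> ICT X f"
    then obtain x where "two_sided_asymptotic_delta_pseudo_orbit X f \<delta> x"
        "alpha_limit x = A" "omega_limit x = A"
      using ICT_two_sided_pseudo_orbit[OF assms(1) _ \<open>\<delta> > 0\<close>] by blast
    then show "\<exists>z. full_trajectory X f z \<and> alpha_limit z = A \<and> omega_limit z = A"
      using shadow by metis
  qed
qed

end
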